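(* For any $q\ge 1$, the simplicial complex $\mathbb{M}_q^2$ is a simplicial tree.
   Context: $\mathbb{M}_q^2$: vertex set $\{\ell_{i,j}:1\le i\le j\le q\}$, $\mathcal{M}=\{\ell_{i,j}:1\le i<j\le q\}$, $\mathcal{M}_i=\mathcal{M}\cup\{\ell_{i,i}\}$, and $\mathbb{M}_q^2$ is the simplicial complex whose facets are $\mathcal{M}_1,\ldots,\mathcal{M}_q$. A subcollection of a simplicial complex $\Delta$ is a subcomplex whose facets are facets of $\Delta$. $\Delta$ is connected if any two facets $F,G$ are joined by a sequence of facets $F=F_0,\ldots,F_r=G$ with $F_{k-1}\cap F_k\neq\emptyset$. A facet $F$ is a leaf if it is the only facet, or there is a facet $G\neq F$ with $F\cap H\subseteq G$ for all facets $H\neq F$. $\Delta$ is a simplicial forest if every subcollection has a leaf, and a simplicial tree if it is a connected simplicial forest. *)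

theory Defs
  imports Main
begin

text \<open>A simplicial complex is represented by its set of facets (a set of vertex sets).
  Subcollections are given by nonempty subsets of the facet set.\<close>

definition is_leaf :: "'v set set \<Rightarrow> 'v set \<Rightarrow> bool" where
  "is_leaf Fs F \<longleftrightarrow> F \<in> Fs \<and>
     (Fs = {F} \<or> (\<exists>G\<in>Fs. G \<noteq> F \<and> (\<forall>H\<in>Fs. H \<noteq> F \<longrightarrow> F \<inter> H \<subseteq> G)))"

definition facet_connected :: "'v set set \<Rightarrow> bool" where
  "facet_connected Fs \<longleftrightarrow> (\<forall>F\<in>Fs. \<forall>G\<in>Fs. \<exists>xs. xs \<noteq> [] \<and> hd xs = F \<and> last xs = G \<and>
      set xs \<subseteq> Fs \<and> (\<forall>k. Suc k < length xs \<longrightarrow> xs ! k \<inter> xs ! Suc k \<noteq> {}))"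

definition simplicial_forest :: "'v set set \<Rightarrow> bool" where
  "simplicial_forest Fs \<longleftrightarrow> (\<forall>Ss. Ss \<subseteq> Fs \<and> Ss \<noteq> {} \<longrightarrow> (\<exists>F\<in>Ss. is_leaf Ss F))"

definition simplicial_tree :: "'v set set \<Rightarrow> bool" where
  "simplicial_tree Fs \<longleftrightarrow> facet_connected Fs \<and> simplicial_forest Fs"

text \<open>Vertex \<ell>_{i,j} is the pair (i,j).\<close>
definition M_set :: "nat \<Rightarrow> (nat \<times> nat) set" where
  "M_set q = {(i, j). 1 \<le> i \<and> i < j \<and> j \<le> q}"

definition M_facet :: "nat \<Rightarrow> nat \<Rightarrow> (nat \<times> nat) set" where
  "M_facet q i = insert (i, i) (M_set q)"

definition Mq2 :: "nat \<Rightarrow> (nat \<times> nat) set set" where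
  "Mq2 q = {M_facet q i | i. 1 \<le> i \<and> i \<le> q}"

end

theory Submission
  imports Defs
begin

text \<open>Any two distinct facets of \<open>\<M>\<^sub>q\<^sup>2\<close> meet exactly in the common simplex
  \<open>\<M>\<close>. In a family with this sunflower shape every facet is a leaf: for
  \<open>H \<noteq> F\<close> the intersection \<open>F \<inter> H\<close> is the kernel, which lies in any other facet
  \<open>G\<close>. The shape passes to subcollections, so the complex is a forest, and it
  is connected because the kernel is nonempty as soon as there are two facets.\<close>

definition sunflower :: "'v set set \<Rightarrow> 'v set \<Rightarrow> bool" where
  "sunflower Fs C \<longleftrightarrow> (\<forall>F\<in>Fs. \<forall>H\<in>Fs. F \<noteq> H \<longrightarrow> F \<inter> H = C)"

lemma sunflower_subset: "sunflower Fs C \<Longrightarrow> Ss \<subseteq> Fs \<Longrightarrow> sunflower Ss C"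
  by (auto simp: sunflower_def)

lemma sunflower_is_leaf:
  assumes "sunflower Fs C" and "F \<in> Fs"
  shows "is_leaf Fs F"
proof (cases "Fs = {F}")
  case True
  then show ?thesis by (simp add: is_leaf_def)
next
  case False
  then obtain G where G: "G \<in> Fs" "G \<noteq> F" using \<open>F \<in> Fs\<close> by blast
  have "F \<inter> H \<subseteq> G" if "H \<in> Fs" "H \<noteq> F" for H
  proof -
    have "F \<inter> H = F \<inter> G"
      using assms that G unfolding sunflower_def by metis
    then show ?thesis by blast
  qed
  then show ?thesis using assms(2) G unfolding is_leaf_def by blast
qed

lemma sunflower_simplicial_forest:
  assumes "sunflower Fs C"
  shows "simplicial_forest Fs"
  unfolding simplicial_forest_def
proof (intro allI impI)
  fix Ss assume "Ss \<subseteq> Fs \<and> Ss \<noteq> {}"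
  then obtain F where "F \<in> Ss" "sunflower Ss C"
    using assms sunflower_subset by blast
  then show "\<exists>F\<in>Ss. is_leaf Ss F"
    using sunflower_is_leaf by blast
qed

lemma facet_connected_if_facets_meet:
  assumes "\<And>F G. F \<in> Fs \<Longrightarrow> G \<in> Fs \<Longrightarrow> F \<noteq> G \<Longrightarrow> F \<inter> G \<noteq> {}"
  shows "facet_connected Fs"
  unfolding facet_connected_def
proof (intro ballI)
  fix F G assume "F \<in> Fs" "G \<in> Fs"
  show "\<exists>xs. xs \<noteq> [] \<and> hd xs = F \<and> last xs = G \<and> set xs \<subseteq> Fs \<and>
      (\<forall>k. Suc k < length xs \<longrightarrow> xs ! k \<inter> xs ! Suc k \<noteq> {})"
  proof (cases "F = G")
    case True
    then show ?thesis using \<open>F \<in> Fs\<close> by (intro exI[of _ "[F]"]) auto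
  next
    case False
    then show ?thesis using \<open>F \<in> Fs\<close> \<open>G \<in> Fs\<close> assms
      by (intro exI[of _ "[F, G]"]) (auto simp: less_Suc_eq)
  qed
qed

lemma M_facet_inter: "i \<noteq> j \<Longrightarrow> M_facet q i \<inter> M_facet q j = M_set q"
  by (auto simp: M_facet_def M_set_def)

lemma sunflower_Mq2: "sunflower (Mq2 q) (M_set q)"
  unfolding sunflower_def
proof (intro ballI impI)
  fix F H assume "F \<in> Mq2 q" "H \<in> Mq2 q" "F \<noteq> H"
  then obtain i j where "F = M_facet q i" "H = M_facet q j" "i \<noteq> j"
    by (auto simp: Mq2_def)
  then show "F \<inter> H = M_set q" by (simp add: M_facet_inter)
qed

lemma Mq2_facets_meet:
  assumes "F \<in> Mq2 q" "G \<in> Mq2 q" "F \<noteq> G"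
  shows "F \<inter> G \<noteq> {}"
proof -
  obtain i j where "F = M_facet q i" "G = M_facet q j" "i \<noteq> j"
    "1 \<le> i" "i \<le> q" "1 \<le> j" "j \<le> q"
    using assms by (auto simp: Mq2_def)
  moreover from this have "(1, 2) \<in> M_set q"
    by (simp add: M_set_def)
  ultimately show ?thesis by (auto simp: M_facet_inter)
qed

theorem proposition3p3:
  fixes q :: nat
  assumes "q \<ge> 1"
  shows "simplicial_tree (Mq2 q)"
proof -
  have "facet_connected (Mq2 q)"
    using Mq2_facets_meet by (rule facet_connected_if_facets_meet)
  moreover have "simplicial_forest (Mq2 q)"
    using sunflower_Mq2 by (rule sunflower_simplicial_forest)
  ultimately show ?thesis by (simp add: simplicial_tree_def)
qed

end
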